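(* Let $0\le p_1<1/2<p_2\le 1$ and $c=\min\{1/2-p_1,\,p_2-1/2\}$. Let $n\ge 4$ and $\ell$ be integers with $(1/c^2)\ln n\le \ell\le n$, and let $a\le p_1\ell$, $b\ge p_2\ell$. Then $|\mathcal{W}(n,\ell,[a,b])|\ge 2^{n-1}$.
   Context: $\mathrm{wt}(\mathbf{x})$ denotes the number of ones of a binary sequence $\mathbf{x}$. For $\mathbf{x}=x_1\dots x_n\in\{0,1\}^n$ and $\ell\le n$, the windows of size $\ell$ are $x_i\dots x_{i+\ell-1}$, $1\le i\le n-\ell+1$. For reals $a\le b$, $\mathcal{W}(n,\ell,[a,b])$ is the set of $\mathbf{x}\in\{0,1\}^n$ all of whose windows of size $\ell$ have weight in $[a,b]$. $\ln$ is the natural logarithm. *)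

theory Defs
  imports Complex_Main
begin

text \<open>Binary sequences x = x_1 ... x_n are lists of booleans (True = 1).\<close>

definition wt :: "bool list \<Rightarrow> nat" where
  "wt x = length (filter id x)"

text \<open>Window of size l starting at position i+1 (0-indexed i), for 0 <= i <= n - l.\<close>
definition window :: "bool list \<Rightarrow> nat \<Rightarrow> nat \<Rightarrow> bool list" where
  "window x l i = take l (drop i x)"

definition W :: "nat \<Rightarrow> nat \<Rightarrow> real \<Rightarrow> real \<Rightarrow> bool list set" where
  "W n l a b = {x. length x = n \<and>
      (\<forall>i. i + l \<le> n \<longrightarrow> a \<le> real (wt (window x l i)) \<and> real (wt (window x l i)) \<le> b)}"

end

theory Submission
  imports Defs "HOL-Probability.Hoeffding"
begin

text \<open>A window of size \<open>l\<close> is bad if its weight deviates from \<open>l/2\<close> by at least \<open>c l\<close>; the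
  constraints on \<open>a\<close> and \<open>b\<close> guarantee that every sequence without bad windows lies in
  \<open>\<W>(n, l, [a, b])\<close>. Counting sequences of length \<open>l\<close> by weight gives the binomial distribution,
  so Hoeffding's inequality bounds the fraction of bad windows by \<open>2 exp(-2 l c\<^sup>2) \<le> 2/n\<^sup>2\<close>.
  A union bound over the at most \<open>n\<close> window positions leaves at most \<open>2\<^sup>n \<cdot> 2/n \<le> 2\<^sup>n\<^sup>-\<^sup>1\<close> sequences
  with a bad window.\<close>

lemma wt_Nil [simp]: "wt [] = 0"
  by (simp add: wt_def)

lemma wt_Cons [simp]: "wt (b # y) = (if b then Suc (wt y) else wt y)"
  by (simp add: wt_def)

lemma wt_le_length: "wt y \<le> length y"
  by (simp add: wt_def)

lemma finite_lists_length_eq_bool: "finite {y :: bool list. length y = l \<and> P y}"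
  using finite_lists_length_eq[of "UNIV :: bool set" l] by (auto intro: rev_finite_subset)

lemma card_lists_length_eq_bool: "card {y :: bool list. length y = l} = 2 ^ l"
  using card_lists_length_eq[of "UNIV :: bool set" l] by simp

lemma card_lists_wt_eq: "card {y. length y = l \<and> wt y = k} = l choose k"
proof (induction l arbitrary: k)
  case 0
  have "{y. length y = 0 \<and> wt y = k} = (if k = 0 then {[]} else {})"
    by auto
  then show ?case
    by simp
next
  case (Suc l)
  show ?case
  proof (cases k)
    case 0
    have "{y. length y = Suc l \<and> wt y = k} = Cons False ` {y. length y = l \<and> wt y = 0}"
      using 0 by (auto simp: length_Suc_conv split: if_splits)
    then show ?thesis
      using Suc.IH[of 0] 0 by (simp add: card_image)
  next
    case (Suc j)
    have split: "{y. length y = Suc l \<and> wt y = k} =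
        Cons True ` {y. length y = l \<and> wt y = j} \<union> Cons False ` {y. length y = l \<and> wt y = k}"
      using Suc by (auto simp: length_Suc_conv split: if_splits)
    have "card {y. length y = Suc l \<and> wt y = k} =
        card (Cons True ` {y. length y = l \<and> wt y = j}) + card (Cons False ` {y. length y = l \<and> wt y = k})"
      unfolding split by (rule card_Un_disjoint) (auto simp: finite_lists_length_eq_bool)
    also have "\<dots> = (l choose j) + (l choose k)"
      using Suc.IH by (simp add: card_image)
    finally show ?thesis
      using Suc by simp
  qed
qed

lemma card_lists_wt_in: "card {y. length y = l \<and> P (wt y)} = (\<Sum>k | k \<le> l \<and> P k. l choose k)"
proof -
  have "{y. length y = l \<and> P (wt y)} = (\<Union>k\<in>{k. k \<le> l \<and> P k}. {y. length y = l \<and> wt y = k})"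
    using wt_le_length by auto
  then have "card {y. length y = l \<and> P (wt y)} = (\<Sum>k | k \<le> l \<and> P k. card {y. length y = l \<and> wt y = k})"
    by (simp only:) (rule card_UN_disjoint, auto simp: finite_lists_length_eq_bool)
  then show ?thesis
    by (simp add: card_lists_wt_eq)
qed

lemma card_lists_wt_far_from_half:
  assumes "l > 0" "c \<ge> 0"
  shows "real (card {y. length y = l \<and> c \<le> \<bar>real (wt y) / real l - 1/2\<bar>}) \<le> 2 ^ l * (2 * exp (-2 * real l * c\<^sup>2))"
proof -
  define S where "S = {k. k \<le> l \<and> c \<le> \<bar>real k / real l - 1/2\<bar>}"
  let ?B = "binomial_pmf l (1/2)"
  have pmf_B: "pmf ?B k = real (l choose k) / 2 ^ l" if "k \<le> l" for k
    using that by (simp add: power_add[symmetric] power_divide)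
  have "real (card {y. length y = l \<and> c \<le> \<bar>real (wt y) / real l - 1/2\<bar>}) = (\<Sum>k\<in>S. real (l choose k))"
    unfolding S_def by (subst card_lists_wt_in) simp
  also have "\<dots> = 2 ^ l * (\<Sum>k\<in>S. pmf ?B k)"
    unfolding sum_distrib_left by (intro sum.cong refl) (simp add: S_def pmf_B del: pmf_binomial)
  also have "(\<Sum>k\<in>S. pmf ?B k) = measure_pmf.prob ?B S"
    by (simp add: S_def measure_measure_pmf_finite)
  also have "\<dots> \<le> measure_pmf.prob ?B {k. c \<le> \<bar>real k / real l - 1/2\<bar>}"
    by (rule measure_pmf.finite_measure_mono) (auto simp: S_def)
  also have "\<dots> \<le> 2 * exp (-2 * real l * c\<^sup>2)"
    using binomial_distribution.prob_abs_ge'[of "1/2" l c] assms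
    by (simp add: binomial_distribution_def)
  finally show ?thesis
    by simp
qed

lemma card_lists_window:
  assumes "i + l \<le> n"
  shows "card {x :: bool list. length x = n \<and> Q (window x l i)} = 2 ^ (n - l) * card {y. length y = l \<and> Q y}"
proof -
  define D where "D = ({u :: bool list. length u = i} \<times> {v :: bool list. length v = n - i - l})
      \<times> {y. length y = l \<and> Q y}"
  define f where "f = (\<lambda>((u :: bool list, v :: bool list), y :: bool list). u @ y @ v)"
  have "{x. length x = n \<and> Q (window x l i)} = f ` D"
  proof (intro set_eqI iffI)
    fix x assume x: "x \<in> {x. length x = n \<and> Q (window x l i)}"
    have "x = f ((take i x, drop l (drop i x)), take l (drop i x))"
      by (simp add: f_def del: drop_drop)
    moreover have "((take i x, drop l (drop i x)), take l (drop i x)) \<in> D"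
      using x assms by (auto simp: D_def window_def)
    ultimately show "x \<in> f ` D"
      by blast
  next
    fix x assume "x \<in> f ` D"
    then show "x \<in> {x. length x = n \<and> Q (window x l i)}"
      using assms by (auto simp: D_def f_def window_def)
  qed
  moreover have "inj_on f D"
    by (auto simp: inj_on_def D_def f_def)
  moreover have "card D = 2 ^ (i + (n - i - l)) * card {y. length y = l \<and> Q y}"
    by (simp add: D_def card_cartesian_product card_lists_length_eq_bool power_add)
  ultimately show ?thesis
    using assms by (simp add: card_image)
qed

lemma card_lists_some_window_le:
  assumes "l \<le> n"
  shows "card {x :: bool list. length x = n \<and> (\<exists>i. i + l \<le> n \<and> Q (window x l i))}
    \<le> (n - l + 1) * (2 ^ (n - l) * card {y. length y = l \<and> Q y})"
proof -
  have "{x. length x = n \<and> (\<exists>i. i + l \<le> n \<and> Q (window x l i))}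
      = (\<Union>i\<in>{..n - l}. {x. length x = n \<and> Q (window x l i)})"
    using assms by (auto simp: le_diff_conv2)
  then have "card {x. length x = n \<and> (\<exists>i. i + l \<le> n \<and> Q (window x l i))}
      \<le> (\<Sum>i\<in>{..n - l}. card {x. length x = n \<and> Q (window x l i)})"
    by (simp add: card_UN_le)
  also have "\<dots> = (\<Sum>i\<in>{..n - l}. 2 ^ (n - l) * card {y. length y = l \<and> Q y})"
    using assms by (intro sum.cong refl card_lists_window) auto
  finally show ?thesis
    by simp
qed

lemma in_interval_if_close_to_half:
  fixes a b c :: real
  assumes "l > 0" "a \<le> (1/2 - c) * real l" "(1/2 + c) * real l \<le> b"
    and "\<bar>real k / real l - 1/2\<bar> < c"
  shows "a \<le> real k \<and> real k \<le> b"
proof -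
  have "\<bar>real k - real l / 2\<bar> < c * real l"
    using assms(1,4) by (simp add: abs_less_iff field_simps)
  then show ?thesis
    using assms(2,3) by (simp add: abs_less_iff algebra_simps)
qed

lemma card_W_ge_if_few_far_windows:
  fixes a b c \<epsilon> :: real
  assumes "0 < l" "l \<le> n" "a \<le> (1/2 - c) * real l" "(1/2 + c) * real l \<le> b" "\<epsilon> \<ge> 0"
    and far: "real (card {y. length y = l \<and> c \<le> \<bar>real (wt y) / real l - 1/2\<bar>}) \<le> 2 ^ l * \<epsilon>"
  shows "real (card (W n l a b)) \<ge> 2 ^ n * (1 - real n * \<epsilon>)"
proof -
  let ?L = "{x :: bool list. length x = n}"
  let ?far = "\<lambda>y. c \<le> \<bar>real (wt y) / real l - 1/2\<bar>"
  let ?bad = "{x. length x = n \<and> (\<exists>i. i + l \<le> n \<and> ?far (window x l i))}"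
  have W_sub: "W n l a b \<subseteq> ?L"
    by (auto simp: W_def)
  have "?L - W n l a b \<subseteq> ?bad"
  proof
    fix x assume "x \<in> ?L - W n l a b"
    then obtain i where "length x = n" "i + l \<le> n"
        "\<not> (a \<le> real (wt (window x l i)) \<and> real (wt (window x l i)) \<le> b)"
      by (auto simp: W_def)
    moreover from this have "\<not> \<bar>real (wt (window x l i)) / real l - 1/2\<bar> < c"
      using in_interval_if_close_to_half[OF assms(1,3,4)] by blast
    then have "?far (window x l i)"
      by simp
    ultimately show "x \<in> ?bad"
      by blast
  qed
  then have "card (?L - W n l a b) \<le> card ?bad"
    by (rule card_mono[OF finite_lists_length_eq_bool])
  moreover have "card ?L = card (W n l a b) + card (?L - W n l a b)"
    using finite_lists_length_eq_bool[of n "\<lambda>_. True"] card_Diff_subset[OF finite_subset[OF W_sub] W_sub]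
      card_mono[OF _ W_sub] by simp
  ultimately have "2 ^ n \<le> card (W n l a b) + card ?bad"
    unfolding card_lists_length_eq_bool by linarith
  then have "2 ^ n \<le> real (card (W n l a b)) + real (card ?bad)"
    using of_nat_mono[where 'a = real] by fastforce
  moreover have "real (card ?bad) \<le> real (n - l + 1) * (2 ^ (n - l) * real (card {y. length y = l \<and> ?far y}))"
    using of_nat_mono[OF card_lists_some_window_le[OF assms(2), of ?far], where 'a = real]
    by (simp only: of_nat_mult of_nat_power of_nat_numeral)
  also have "\<dots> \<le> real n * (2 ^ (n - l) * (2 ^ l * \<epsilon>))"
    using assms(1,2,5) far by (intro mult_mono) auto
  also have "\<dots> = 2 ^ n * (real n * \<epsilon>)"
    using assms(2) by (simp add: power_add[symmetric])
  finally show ?thesis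
    by (simp add: algebra_simps)
qed

lemma exp_minus_two_mult_le_inverse_square:
  fixes x t :: real
  assumes "0 < x" "ln x \<le> t"
  shows "exp (-2 * t) \<le> 1 / x\<^sup>2"
proof -
  have "exp (-2 * t) \<le> exp (- (2 * ln x))"
    using assms(2) by simp
  also have "\<dots> = 1 / x\<^sup>2"
    using exp_of_nat_mult[of 2 "ln x"] assms(1) by (simp add: exp_minus inverse_eq_divide)
  finally show ?thesis .
qed

theorem theorem4:
  fixes p1 p2 c a b :: real and n l :: nat
  assumes "0 \<le> p1" and "p1 < 1/2" and "1/2 < p2" and "p2 \<le> 1"
    and "c = min (1/2 - p1) (p2 - 1/2)"
    and "n \<ge> 4"
    and "(1 / c^2) * ln (real n) \<le> real l" and "l \<le> n"
    and "a \<le> p1 * real l" and "b \<ge> p2 * real l"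
  shows "card (W n l a b) \<ge> 2 ^ (n - 1)"
proof -
  have "c > 0" "ln (real n) > 0"
    using assms by auto
  then have "l > 0" and ln_le: "ln (real n) \<le> real l * c\<^sup>2"
    using assms(7) by (auto simp: field_simps intro: gr0I)
  have "real (card {y. length y = l \<and> c \<le> \<bar>real (wt y) / real l - 1/2\<bar>})
      \<le> 2 ^ l * (2 * exp (-2 * (real l * c\<^sup>2)))"
    using card_lists_wt_far_from_half[OF \<open>l > 0\<close>, of c] \<open>c > 0\<close> by (simp add: mult.assoc)
  also have "\<dots> \<le> 2 ^ l * (2 / (real n)\<^sup>2)"
    using exp_minus_two_mult_le_inverse_square[OF _ ln_le] assms(6) by (intro mult_left_mono) auto
  finally have far: "real (card {y. length y = l \<and> c \<le> \<bar>real (wt y) / real l - 1/2\<bar>})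
      \<le> 2 ^ l * (2 / (real n)\<^sup>2)" .
  have "p1 * real l \<le> (1/2 - c) * real l" "(1/2 + c) * real l \<le> p2 * real l"
    using assms(5) by (auto intro: mult_right_mono)
  then have "a \<le> (1/2 - c) * real l" "(1/2 + c) * real l \<le> b"
    using assms(9,10) by linarith+
  then have "2 ^ n * (1 - real n * (2 / (real n)\<^sup>2)) \<le> real (card (W n l a b))"
    using card_W_ge_if_few_far_windows[OF \<open>l > 0\<close> assms(8) _ _ _ far] by simp
  moreover have "(2::real) ^ n / 2 \<le> 2 ^ n * (1 - real n * (2 / (real n)\<^sup>2))"
    using assms(6) by (simp add: power2_eq_square field_simps)
  moreover have "(2::real) ^ n / 2 = real (2 ^ (n - 1))"
    using assms(6) by (cases n) simp_all
  ultimately show ?thesis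
    by (simp only: of_nat_le_iff[symmetric])
qed

end
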